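(* Let $t$ be a positive integer, let $\overline{\mathcal{G}}_t$, $\overline{\mathcal{P}}_t$ and $\phi:\overline{\mathcal{G}}_t\to\overline{\mathcal{P}}_t$ be as described in the context, and let $\mu\in\overline{\mathcal{P}}_t$. (i) If $\ell(\mu)=m(\mu)$, then $\mu$ has exactly $2m(\mu)$ pre-images in $\overline{\mathcal{G}}_t$ under $\phi$; of these, exactly $m(\mu)$ have no overlined parts, and the other $m(\mu)$ have the first occurrence of the smallest part overlined. (ii) If $\ell(\mu)>m(\mu)$, then $\mu$ has exactly $2m(\mu)+1$ pre-images in $\overline{\mathcal{G}}_t$ under $\phi$; of these, exactly $m(\mu)+1$ have the same number of overlined parts as $\mu$, and the other $m(\mu)$ have exactly one more overlined part than $\mu$.
   Context: An overpartition is a partition (weakly decreasing sequence of positive integers) in which the first occurrence of each distinct part size may be overlined; an overlined part $\overline{a}$ has size $a$. $\ell(\lambda)$ is the number of parts of $\lambda$; for $\mu\in\overline{\mathcal{P}}_t$, $m(\mu)$ is the number of parts of $\mu$ equal to $t$. $\overline{\mathcal{G}}_t$ is the set of nonempty overpartitions whose largest and smallest parts differ by at most $t$, with the largest part not overlined whenever this difference is exactly $t$. $\overline{\mathcal{P}}_t$ is the set of nonempty overpartitions with all parts at most $t$ and no part equal to $t$ overlined. For $\pi=(\pi_1,\dots,\pi_\ell)\in\overline{\mathcal{G}}_t$, let $s=\lfloor \pi_\ell/t\rfloor$ and let $k$ be the positive integer with $\pi_k\ge (s+1)t>\pi_{k+1}$ if it exists, $k=0$ otherwise; then $\phi(\pi)$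 is the overpartition $(t,\dots,t,\ \pi_{k+1}-st,\dots,\pi_\ell-st,\ \pi_1-(s+1)t,\dots,\pi_k-(s+1)t)$ with exactly $s(\ell-k)+(s+1)k$ initial non-overlined parts equal to $t$, where each $\pi_i-st$ or $\pi_i-(s+1)t$ is overlined exactly when $\pi_i$ is, and all parts equal to $0$ are deleted. (This $\phi(\pi)$ lies in $\overline{\mathcal{P}}_t$.) *)

theory Defs
  imports Main
begin

text \<open>An overpartition is represented as a list of parts (a, b), where a is the
  size of the part and b is True iff the part is overlined.  The list is weakly
  decreasing in the sizes, all sizes are positive, and a part may be overlined
  only if it is the first occurrence of its size (in a weakly decreasing list:
  the previous part has a different size).\<close>

type_synonym ovp = "(nat \<times> bool) list"

definition is_overpartition :: "ovp \<Rightarrow> bool" where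
  "is_overpartition xs \<longleftrightarrow>
     sorted_wrt (\<lambda>p q. fst p \<ge> fst q) xs \<and>
     (\<forall>p\<in>set xs. fst p > 0) \<and>
     (\<forall>i<length xs. snd (xs ! i) \<longrightarrow> i = 0 \<or> fst (xs ! (i - 1)) \<noteq> fst (xs ! i))"

definition Gbar :: "nat \<Rightarrow> ovp set" where
  "Gbar t = {p. is_overpartition p \<and> p \<noteq> [] \<and>
      fst (hd p) - fst (last p) \<le> t \<and>
      (fst (hd p) - fst (last p) = t \<longrightarrow> \<not> snd (hd p))}"

definition Pbar :: "nat \<Rightarrow> ovp set" where
  "Pbar t = {p. is_overpartition p \<and> p \<noteq> [] \<and>
      (\<forall>q\<in>set p. fst q \<le> t \<and> (fst q = t \<longrightarrow> \<not> snd q))}"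

definition mult_t :: "nat \<Rightarrow> ovp \<Rightarrow> nat" where
  "mult_t t p = length (filter (\<lambda>q. fst q = t) p)"

definition num_ovl :: "ovp \<Rightarrow> nat" where
  "num_ovl p = length (filter snd p)"

definition smallest_first_ovl :: "ovp \<Rightarrow> bool" where
  "smallest_first_ovl p = snd (hd (dropWhile (\<lambda>q. fst q \<noteq> fst (last p)) p))"

text \<open>The map phi: s = floor(pi_l / t); the first k parts are exactly those
  with size at least (s+1)t (the list is weakly decreasing).\<close>
definition phi :: "nat \<Rightarrow> ovp \<Rightarrow> ovp" where
  "phi t p = (let s = fst (last p) div t;
                  A = takeWhile (\<lambda>q. fst q \<ge> (s + 1) * t) p;
                  B = dropWhile (\<lambda>q. fst q \<ge> (s + 1) * t) p;
                  k = length A; l = length p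
              in replicate (s * (l - k) + (s + 1) * k) (t, False) @
                 filter (\<lambda>q. fst q \<noteq> 0)
                   (map (\<lambda>(a, b). (a - s * t, b)) B @
                    map (\<lambda>(a, b). (a - (s + 1) * t, b)) A))"

end

theory Submission imports Defs begin

text \<open>Write \<open>\<mu> = t\<^sup>m \<nu>\<close> with all parts of \<open>\<nu>\<close> smaller than \<open>t\<close>. Removing the smallest part
  of \<open>\<pi> \<in> \<overline>\<G>\<^sub>t\<close> and reinserting it, increased by \<open>t\<close>, as the new largest part keeps \<open>\<pi>\<close> in
  \<open>\<overline>\<G>\<^sub>t\<close> and prepends one part \<open>t\<close> to \<open>\<phi>(\<pi>)\<close>; every \<open>\<pi> \<in> \<overline>\<G>\<^sub>t\<close> with largest part above \<open>t\<close>
  arises in this way. The remaining elements of \<open>\<overline>\<G>\<^sub>t\<close> have the form \<open>t\<^sup>a \<nu>\<close>, the first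
  \<open>t\<close> possibly overlined, and are fixed by \<open>\<phi>\<close>. Hence the preimages of \<open>\<mu>\<close> are the
  \<open>(m - a)\<close>-fold lifts of these for \<open>0 \<le> a \<le> m\<close>, pairwise distinct, where \<open>a = 0\<close> requires
  \<open>\<nu>\<close> nonempty and allows no overline. Lifting does not change the overlined parts and, when
  \<open>\<nu>\<close> is empty, keeps the overline on the first occurrence of the smallest part, so the count
  splits according to whether the first \<open>t\<close> is overlined.\<close>

fun ovl_first_occ :: "ovp \<Rightarrow> bool" where
  "ovl_first_occ (x # y # zs) = ((snd y \<longrightarrow> fst x \<noteq> fst y) \<and> ovl_first_occ (y # zs))"
| "ovl_first_occ _ = True"

lemma ovl_first_occ_iff_nth:
  "(\<forall>i<length xs. snd (xs ! i) \<longrightarrow> i = 0 \<or> fst (xs ! (i - 1)) \<noteq> fst (xs ! i)) \<longleftrightarrow> ovl_first_occ xs"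
proof (induction xs rule: ovl_first_occ.induct)
  case (1 x y zs)
  have "(\<forall>i<length (x # y # zs). snd ((x # y # zs) ! i) \<longrightarrow>
            i = 0 \<or> fst ((x # y # zs) ! (i - 1)) \<noteq> fst ((x # y # zs) ! i))
    \<longleftrightarrow> (snd y \<longrightarrow> fst x \<noteq> fst y) \<and>
        (\<forall>i<length (y # zs). snd ((y # zs) ! i) \<longrightarrow>
            i = 0 \<or> fst ((y # zs) ! (i - 1)) \<noteq> fst ((y # zs) ! i))"
    (is "?L \<longleftrightarrow> ?R")
  proof
    assume L: ?L
    show ?R
    proof (intro conjI allI impI)
      assume "snd y" then show "fst x \<noteq> fst y" using L[rule_format, of 1] by simp
    next
      fix i assume "i < length (y # zs)" "snd ((y # zs) ! i)"
      then show "i = 0 \<or> fst ((y # zs) ! (i - 1)) \<noteq> fst ((y # zs) ! i)"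
        using L[rule_format, of "Suc i"] by (cases i) auto
    qed
  next
    assume R: ?R
    show ?L
    proof (intro allI impI)
      fix i assume "i < length (x # y # zs)" "snd ((x # y # zs) ! i)"
      then show "i = 0 \<or> fst ((x # y # zs) ! (i - 1)) \<noteq> fst ((x # y # zs) ! i)"
        using R by (cases i; cases "i - 1") auto
    qed
  qed
  then show ?case using 1 by simp
qed auto

abbreviation size_ge :: "nat \<times> bool \<Rightarrow> nat \<times> bool \<Rightarrow> bool" where
  "size_ge p q \<equiv> fst q \<le> fst p"

lemma is_overpartition_iff:
  "is_overpartition xs \<longleftrightarrow> sorted_wrt size_ge xs \<and> (\<forall>p\<in>set xs. 0 < fst p) \<and> ovl_first_occ xs"
  unfolding is_overpartition_def ovl_first_occ_iff_nth ..

lemma ovl_first_occ_Cons: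
  "ovl_first_occ (x # xs) \<longleftrightarrow> ovl_first_occ xs \<and> (xs \<noteq> [] \<longrightarrow> snd (hd xs) \<longrightarrow> fst x \<noteq> fst (hd xs))"
  by (cases xs) auto

lemma ovl_first_occ_append:
  "ovl_first_occ (xs @ ys) \<longleftrightarrow> ovl_first_occ xs \<and> ovl_first_occ ys \<and>
     (xs \<noteq> [] \<longrightarrow> ys \<noteq> [] \<longrightarrow> snd (hd ys) \<longrightarrow> fst (last xs) \<noteq> fst (hd ys))"
  by (induction xs) (auto simp: ovl_first_occ_Cons)

lemma ovl_first_occ_replicate: "ovl_first_occ ((v, b) # replicate n (v, False))"
  by (induction n arbitrary: b) (auto simp: ovl_first_occ_Cons)

lemma ovl_first_occ_const_size:
  assumes "ovl_first_occ (x # ys)" "\<forall>q\<in>set (x # ys). fst q = v"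
  shows "ys = replicate (length ys) (v, False)"
  using assms
proof (induction ys arbitrary: x)
  case (Cons y ys)
  then show ?case by (cases y) (auto dest: Cons.IH)
qed simp

lemma replicate_append_cancel:
  assumes "x \<notin> set xs" "x \<notin> set ys" "replicate a x @ xs = replicate c x @ ys"
  shows "a = c \<and> xs = ys"
  using assms
proof (induction a arbitrary: c)
  case 0 then show ?case by (cases c) auto
next
  case (Suc a) then show ?case by (cases c) auto
qed

lemma sorted_size_bounds:
  assumes "sorted_wrt size_ge xs" "q \<in> set xs"
  shows "fst (last xs) \<le> fst q \<and> fst q \<le> fst (hd xs)"
  using assms by (induction xs) (auto split: if_splits simp: neq_Nil_conv)

lemma GbarD:
  assumes "\<pi> \<in> Gbar t"
  shows "\<pi> \<noteq> []" "sorted_wrt size_ge \<pi>" "\<forall>p\<in>set \<pi>. 0 < fst p" "ovl_first_occ \<pi>"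
    "fst (hd \<pi>) \<le> fst (last \<pi>) + t"
    "fst (hd \<pi>) = fst (last \<pi>) + t \<Longrightarrow> \<not> snd (hd \<pi>)"
  using assms unfolding Gbar_def is_overpartition_iff by auto

lemma GbarI:
  assumes "\<pi> \<noteq> []" "sorted_wrt size_ge \<pi>" "\<forall>p\<in>set \<pi>. 0 < fst p" "ovl_first_occ \<pi>"
    "fst (hd \<pi>) \<le> fst (last \<pi>) + t"
    "fst (hd \<pi>) = fst (last \<pi>) + t \<Longrightarrow> \<not> snd (hd \<pi>)"
  shows "\<pi> \<in> Gbar t"
proof -
  have "fst (last \<pi>) \<le> fst (hd \<pi>)" using sorted_size_bounds[OF assms(2) hd_in_set[OF assms(1)]] by simp
  then show ?thesis using assms unfolding Gbar_def is_overpartition_iff by auto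
qed

lemma Gbar_bounds:
  assumes "\<pi> \<in> Gbar t" "q \<in> set \<pi>"
  shows "fst (last \<pi>) \<le> fst q \<and> fst q \<le> fst (last \<pi>) + t"
  using sorted_size_bounds[OF GbarD(2)[OF assms(1)] assms(2)] GbarD(5)[OF assms(1)] by simp

section \<open>Lifting the smallest part\<close>

lemma phi_append:
  assumes "B \<noteq> []" "s = fst (last B) div t"
    and "\<forall>q\<in>set A. (s + 1) * t \<le> fst q" "\<forall>q\<in>set B. fst q < (s + 1) * t"
  shows "phi t (A @ B) = replicate (s * length B + (s + 1) * length A) (t, False) @
     filter (\<lambda>q. fst q \<noteq> 0)
       (map (\<lambda>(a, b). (a - s * t, b)) B @ map (\<lambda>(a, b). (a - (s + 1) * t, b)) A)"
proof -
  let ?P = "\<lambda>q. (s + 1) * t \<le> fst q"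
  have "takeWhile ?P (A @ B) = A" "dropWhile ?P (A @ B) = B"
    using assms by (cases B; auto simp: takeWhile_append2 dropWhile_append2)+
  moreover have "last (A @ B) = last B" using assms(1) by simp
  ultimately show ?thesis using assms(2) unfolding phi_def Let_def by (simp add: algebra_simps)
qed

lemma Gbar_split_at_level:
  assumes "0 < t" "\<pi> \<in> Gbar t"
  defines "s \<equiv> fst (last \<pi>) div t"
  obtains A B where "\<pi> = A @ B" "B \<noteq> []"
    "\<forall>q\<in>set A. (s + 1) * t \<le> fst q" "\<forall>q\<in>set B. s * t \<le> fst q \<and> fst q < (s + 1) * t"
proof -
  let ?P = "\<lambda>q. (s + 1) * t \<le> fst q"
  define A where "A = takeWhile ?P \<pi>"
  define B where "B = dropWhile ?P \<pi>"
  have \<pi>: "\<pi> = A @ B" unfolding A_def B_def by simp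
  have s: "s * t \<le> fst (last \<pi>)" "fst (last \<pi>) < (s + 1) * t"
    unfolding s_def using assms(1) div_times_less_eq_dividend dividend_less_div_times by auto
  have "B \<noteq> []"
  proof
    assume "B = []"
    then have "?P (last \<pi>)" using GbarD(1)[OF assms(2)] \<pi> unfolding A_def
      by (metis append_Nil2 last_in_set set_takeWhileD)
    then show False using s by simp
  qed
  moreover have "\<forall>q\<in>set A. ?P q" unfolding A_def by (auto dest: set_takeWhileD)
  moreover have "\<forall>q\<in>set B. s * t \<le> fst q \<and> fst q < (s + 1) * t"
  proof
    fix q assume q: "q \<in> set B"
    have "\<not> ?P (hd B)" using \<open>B \<noteq> []\<close> hd_dropWhile unfolding B_def by metis
    moreover have "sorted_wrt size_ge B" using GbarD(2)[OF assms(2)] \<pi> by (simp add: sorted_wrt_append)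
    ultimately have "fst q < (s + 1) * t" using sorted_size_bounds[of B q] q by fastforce
    moreover have "fst (last \<pi>) \<le> fst q" using Gbar_bounds[OF assms(2)] q \<pi> by simp
    ultimately show "s * t \<le> fst q \<and> fst q < (s + 1) * t" using s by simp
  qed
  ultimately show ?thesis using that \<pi> by blast
qed

text \<open>The inverse of one step of \<open>\<phi>\<close>.\<close>

definition lift_last :: "nat \<Rightarrow> ovp \<Rightarrow> ovp" where
  "lift_last t xs = (fst (last xs) + t, snd (last xs)) # butlast xs"

definition lower_hd :: "nat \<Rightarrow> ovp \<Rightarrow> ovp" where
  "lower_hd t xs = tl xs @ [(fst (hd xs) - t, snd (hd xs))]"

lemma phi_lift_last:
  assumes t: "0 < t" and G: "\<pi> \<in> Gbar t"
  shows "phi t (lift_last t \<pi>) = (t, False) # phi t \<pi>"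
proof -
  define s where "s = fst (last \<pi>) div t"
  obtain A B where \<pi>: "\<pi> = A @ B" and "B \<noteq> []" and A: "\<forall>q\<in>set A. (s + 1) * t \<le> fst q"
    and B: "\<forall>q\<in>set B. s * t \<le> fst q \<and> fst q < (s + 1) * t"
    using Gbar_split_at_level[OF t G] unfolding s_def[symmetric] by blast
  obtain B' y ob where B': "B = B' @ [(y, ob)]"
    using \<open>B \<noteq> []\<close> by (metis prod.exhaust rev_exhaust)
  have last: "last \<pi> = (y, ob)" and lift: "lift_last t \<pi> = (y + t, ob) # A @ B'"
    unfolding lift_last_def \<pi> B' by (simp_all add: butlast_append)
  have y: "s * t \<le> y" "y < (s + 1) * t" using B B' by auto
  have A_le: "\<forall>q\<in>set A. fst q \<le> y + t" using Gbar_bounds[OF G] last \<pi> by auto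
  have sub: "y + t - (s + 1) * t = y - s * t" by simp
  have "phi t \<pi> = replicate (s * length B + (s + 1) * length A) (t, False) @
      filter (\<lambda>q. fst q \<noteq> 0)
        (map (\<lambda>(a, b). (a - s * t, b)) B @ map (\<lambda>(a, b). (a - (s + 1) * t, b)) A)"
    unfolding \<pi> using phi_append[OF \<open>B \<noteq> []\<close> _ A] B s_def \<pi> \<open>B \<noteq> []\<close> by simp
  moreover have "phi t (lift_last t \<pi>) = replicate (Suc (s * length B + (s + 1) * length A)) (t, False) @
      filter (\<lambda>q. fst q \<noteq> 0)
        (map (\<lambda>(a, b). (a - s * t, b)) B @ map (\<lambda>(a, b). (a - (s + 1) * t, b)) A)"
  proof (cases "B' = []")
    case True
    let ?A = "(y + t, ob) # A"
    have A': "\<forall>q\<in>set ?A. (s + 1) * t \<le> fst q \<and> fst q < (s + 1 + 1) * t" using A A_le y by auto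
    moreover have "last ?A \<in> set ?A" by (rule last_in_set) simp
    ultimately have "s + 1 = fst (last ?A) div t"
      by (intro div_nat_eqI[symmetric]) (auto simp: algebra_simps simp del: last.simps)
    from phi_append[of ?A "s + 1" t "[]", OF _ this] A'
    have "phi t ([] @ ?A) = replicate ((s + 1) * length ?A) (t, False) @
        filter (\<lambda>q. fst q \<noteq> 0) (map (\<lambda>(a, b). (a - (s + 1) * t, b)) ?A)"
      by simp
    then show ?thesis using lift True B' sub by (simp add: algebra_simps)
  next
    case False
    then have "last B' \<in> set B" using B' by simp
    then have "fst (last B') div t = s"
      using B by (intro div_nat_eqI) (auto simp: algebra_simps)
    then have "phi t (((y + t, ob) # A) @ B') = replicate (s * length B' + (s + 1) * length ((y + t, ob) # A)) (t, False) @
        filter (\<lambda>q. fst q \<noteq> 0)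
          (map (\<lambda>(a, b). (a - s * t, b)) B' @ map (\<lambda>(a, b). (a - (s + 1) * t, b)) ((y + t, ob) # A))"
      using phi_append[OF False, of s t "(y + t, ob) # A"] A B B' y by auto
    then show ?thesis using lift B' sub by simp
  qed
  ultimately show ?thesis by simp
qed

lemma lift_last_Gbar:
  assumes t: "0 < t" and G: "\<pi> \<in> Gbar t"
  shows "lift_last t \<pi> \<in> Gbar t"
proof -
  note g = GbarD[OF G]
  obtain bl y ob where \<pi>: "\<pi> = bl @ [(y, ob)]" using g(1) by (metis prod.exhaust rev_exhaust)
  have lift: "lift_last t \<pi> = (y + t, ob) # bl" unfolding lift_last_def \<pi> by simp
  have sbl: "sorted_wrt size_ge bl" and yb: "\<forall>q\<in>set bl. y \<le> fst q"
    using g(2) unfolding \<pi> by (auto simp: sorted_wrt_append)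
  have bnd: "\<And>q. q \<in> set \<pi> \<Longrightarrow> y \<le> fst q \<and> fst q \<le> y + t"
    using Gbar_bounds[OF G] \<pi> by fastforce
  have okbl: "ovl_first_occ bl" and okj: "bl \<noteq> [] \<Longrightarrow> ob \<Longrightarrow> fst (last bl) \<noteq> y"
    using g(4) unfolding \<pi> ovl_first_occ_append by auto
  have hdbl: "bl \<noteq> [] \<Longrightarrow> hd bl = hd \<pi>" using \<pi> by simp
  show ?thesis unfolding lift
  proof (rule GbarI)
    show "sorted_wrt size_ge ((y + t, ob) # bl)" using sbl bnd \<pi> by auto
    show "\<forall>p\<in>set ((y + t, ob) # bl). 0 < fst p" using g(3) \<pi> t by auto
    show "ovl_first_occ ((y + t, ob) # bl)"
      unfolding ovl_first_occ_Cons using okbl hdbl g(6) \<pi> by (auto simp: hd_append)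
    show "fst (hd ((y + t, ob) # bl)) \<le> fst (last ((y + t, ob) # bl)) + t"
      using yb by (cases "bl = []") auto
    show "\<not> snd (hd ((y + t, ob) # bl))"
      if "fst (hd ((y + t, ob) # bl)) = fst (last ((y + t, ob) # bl)) + t"
      using that okj t by (cases "bl = []") auto
  qed simp
qed

lemma lift_last_hd_gt: "0 < t \<Longrightarrow> \<pi> \<in> Gbar t \<Longrightarrow> t < fst (hd (lift_last t \<pi>))"
  using GbarD(1,3)[of \<pi> t] unfolding lift_last_def by simp

lemma lower_hd_Gbar:
  assumes t: "0 < t" and G: "\<pi> \<in> Gbar t" and h: "t < fst (hd \<pi>)"
  shows "lower_hd t \<pi> \<in> Gbar t" "lift_last t (lower_hd t \<pi>) = \<pi>"
proof -
  note g = GbarD[OF G]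
  obtain h0 ob xs where \<pi>: "\<pi> = (h0, ob) # xs" using g(1) by (metis list.exhaust prod.exhaust)
  have lower: "lower_hd t \<pi> = xs @ [(h0 - t, ob)]" unfolding lower_hd_def \<pi> by simp
  have lb: "h0 - t \<le> fst (last \<pi>)" using g(5) \<pi> by simp
  have xs_ge: "\<forall>q\<in>set xs. h0 - t \<le> fst q"
    using Gbar_bounds[OF G] lb \<pi> by (meson dual_order.trans list.set_intros(2))
  have sxs: "sorted_wrt size_ge xs" using g(2) \<pi> by simp
  have okxs: "ovl_first_occ xs" and okh: "xs \<noteq> [] \<Longrightarrow> snd (hd xs) \<Longrightarrow> h0 \<noteq> fst (hd xs)"
    using g(4) \<pi> ovl_first_occ_Cons by auto
  show "lower_hd t \<pi> \<in> Gbar t" unfolding lower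
  proof (rule GbarI)
    show "sorted_wrt size_ge (xs @ [(h0 - t, ob)])" using sxs xs_ge by (simp add: sorted_wrt_append)
    show "\<forall>p\<in>set (xs @ [(h0 - t, ob)]). 0 < fst p" using g(3) \<pi> h by auto
    show "ovl_first_occ (xs @ [(h0 - t, ob)])"
      unfolding ovl_first_occ_append using okxs g(6) \<pi> lb h by (auto simp: le_add_diff_inverse2)
    show "fst (hd (xs @ [(h0 - t, ob)])) \<le> fst (last (xs @ [(h0 - t, ob)])) + t"
      using g(2) \<pi> h by (cases xs) auto
    show "\<not> snd (hd (xs @ [(h0 - t, ob)]))"
      if "fst (hd (xs @ [(h0 - t, ob)])) = fst (last (xs @ [(h0 - t, ob)])) + t"
      using that okh h t \<pi> by (cases "xs = []") (auto simp: le_add_diff_inverse2)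
  qed simp
  show "lift_last t (lower_hd t \<pi>) = \<pi>" unfolding lower lift_last_def using h \<pi> by simp
qed

lemma funpow_lift_last_Gbar: "0 < t \<Longrightarrow> \<pi> \<in> Gbar t \<Longrightarrow> (lift_last t ^^ n) \<pi> \<in> Gbar t"
  by (induction n) (auto intro: lift_last_Gbar)

lemma phi_funpow_lift_last:
  "0 < t \<Longrightarrow> \<pi> \<in> Gbar t \<Longrightarrow> phi t ((lift_last t ^^ n) \<pi>) = replicate n (t, False) @ phi t \<pi>"
  by (induction n) (auto simp: phi_lift_last funpow_lift_last_Gbar)

lemma funpow_lift_last_ne: "xs \<noteq> [] \<Longrightarrow> (lift_last t ^^ n) xs \<noteq> []"
  by (cases n) (auto simp: lift_last_def)

lemma num_ovl_lift_last: "xs \<noteq> [] \<Longrightarrow> num_ovl (lift_last t xs) = num_ovl xs"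
  by (induction xs rule: rev_induct) (auto simp: lift_last_def num_ovl_def)

lemma num_ovl_funpow_lift_last: "xs \<noteq> [] \<Longrightarrow> num_ovl ((lift_last t ^^ n) xs) = num_ovl xs"
  by (induction n) (simp_all add: num_ovl_lift_last funpow_lift_last_ne)

lemma lift_last_inj: "xs \<noteq> [] \<Longrightarrow> ys \<noteq> [] \<Longrightarrow> lift_last t xs = lift_last t ys \<Longrightarrow> xs = ys"
  unfolding lift_last_def by (metis append_butlast_last_id list.inject prod.expand fst_conv snd_conv add_right_imp_eq)

lemma funpow_lift_last_inj:
  "xs \<noteq> [] \<Longrightarrow> ys \<noteq> [] \<Longrightarrow> (lift_last t ^^ n) xs = (lift_last t ^^ n) ys \<Longrightarrow> xs = ys"
  by (induction n) (simp_all, metis lift_last_inj funpow_lift_last_ne)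

section \<open>Preimages with largest part at most \<open>t\<close>\<close>

definition base_ovp :: "nat \<Rightarrow> nat \<Rightarrow> bool \<Rightarrow> ovp \<Rightarrow> ovp" where
  "base_ovp t a b \<nu> = (if a = 0 then \<nu> else (t, b) # replicate (a - 1) (t, False) @ \<nu>)"

lemma hd_base_ovp: "0 < a \<Longrightarrow> hd (base_ovp t a b \<nu>) = (t, b)"
  unfolding base_ovp_def by simp

lemma num_ovl_base_ovp: "num_ovl (base_ovp t a b \<nu>) = (if 0 < a \<and> b then 1 else 0) + num_ovl \<nu>"
  unfolding base_ovp_def num_ovl_def by simp

lemma base_ovp_Gbar:
  assumes t: "0 < t" and \<nu>: "is_overpartition \<nu>" "\<forall>q\<in>set \<nu>. fst q < t" and ne: "0 < a \<or> \<nu> \<noteq> []"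
  shows "base_ovp t a b \<nu> \<in> Gbar t"
proof (cases "a = 0")
  case True
  then have base: "base_ovp t a b \<nu> = \<nu>" and "\<nu> \<noteq> []" using ne by (auto simp: base_ovp_def)
  have "fst (hd \<nu>) < t" using \<nu>(2) hd_in_set[OF \<open>\<nu> \<noteq> []\<close>] by blast
  then show ?thesis
    unfolding base using \<open>\<nu> \<noteq> []\<close> \<nu>(1) by (intro GbarI) (auto simp: is_overpartition_iff)
next
  case False
  define T where "T = (t, b) # replicate (a - 1) (t, False)"
  have base: "base_ovp t a b \<nu> = T @ \<nu>" unfolding base_ovp_def T_def using False by simp
  have T_t: "\<forall>q\<in>set T. fst q = t" and T_ne: "T \<noteq> []" unfolding T_def by auto
  have "sorted_wrt size_ge (replicate n (t, False))" for n by (induction n) auto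
  then have sT: "sorted_wrt size_ge T" unfolding T_def by auto
  have okT: "ovl_first_occ T" unfolding T_def by (rule ovl_first_occ_replicate)
  have lastT: "fst (last T) = t" using T_t T_ne by simp
  have \<nu>': "sorted_wrt size_ge \<nu>" "\<forall>q\<in>set \<nu>. 0 < fst q \<and> fst q < t" "ovl_first_occ \<nu>"
    using \<nu> unfolding is_overpartition_iff by auto
  show ?thesis unfolding base
  proof (rule GbarI)
    show "sorted_wrt size_ge (T @ \<nu>)" using sT \<nu>' T_t by (auto simp: sorted_wrt_append less_imp_le)
    show "\<forall>p\<in>set (T @ \<nu>). 0 < fst p" using T_t \<nu>' t by auto
    show "ovl_first_occ (T @ \<nu>)" unfolding ovl_first_occ_append using okT \<nu>' lastT by fastforce
    show "fst (hd (T @ \<nu>)) \<le> fst (last (T @ \<nu>)) + t" using T_ne T_t by simp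
    show "\<not> snd (hd (T @ \<nu>))" if "fst (hd (T @ \<nu>)) = fst (last (T @ \<nu>)) + t"
    proof (cases "\<nu> = []")
      case False
      then have "0 < fst (last \<nu>)" using \<nu>'(2) last_in_set[OF False] by blast
      then show ?thesis using that False T_ne T_t by simp
    qed (use that lastT t in \<open>simp add: T_def\<close>)
  qed (simp add: T_def)
qed

lemma Gbar_small_hd_base:
  assumes G: "\<pi> \<in> Gbar t" and h: "fst (hd \<pi>) \<le> t"
  obtains a b \<nu> where "\<pi> = base_ovp t a b \<nu>" "a = 0 \<longrightarrow> \<not> b" "\<forall>q\<in>set \<nu>. fst q < t"
proof -
  note g = GbarD[OF G]
  define T where "T = takeWhile (\<lambda>q. fst q = t) \<pi>"
  define D where "D = dropWhile (\<lambda>q. fst q = t) \<pi>"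
  have \<pi>: "\<pi> = T @ D" unfolding T_def D_def by simp
  have D_lt: "\<forall>q\<in>set D. fst q < t"
  proof
    fix q assume q: "q \<in> set D"
    then have "D \<noteq> []" by auto
    then have "fst (hd D) \<noteq> t" using hd_dropWhile[of "\<lambda>q. fst q = t" \<pi>] unfolding D_def by auto
    moreover have "hd D \<in> set \<pi>" using \<open>D \<noteq> []\<close> \<pi> by (metis Un_iff hd_in_set set_append)
    ultimately have "fst (hd D) < t" using sorted_size_bounds[OF g(2)] h by fastforce
    moreover have "sorted_wrt size_ge D" using g(2) \<pi> by (simp add: sorted_wrt_append)
    ultimately show "fst q < t" using sorted_size_bounds[of D q] q by simp
  qed
  show ?thesis
  proof (cases T)
    case Nil
    then show ?thesis using that[of 0 False D] \<pi> D_lt by (simp add: base_ovp_def)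
  next
    case (Cons x ys)
    have T_t: "\<forall>q\<in>set (x # ys). fst q = t" using set_takeWhileD[of _ "\<lambda>q. fst q = t" \<pi>] unfolding T_def[symmetric] Cons by blast
    have "ovl_first_occ (x # ys)" using g(4) \<pi> Cons ovl_first_occ_append by metis
    then have "ys = replicate (length ys) (t, False)" using T_t by (rule ovl_first_occ_const_size)
    moreover have "x = (t, snd x)" using T_t by (cases x) auto
    ultimately have "\<pi> = base_ovp t (Suc (length ys)) (snd x) D"
      unfolding base_ovp_def using \<pi> Cons by simp
    then show ?thesis using that D_lt by blast
  qed
qed

lemma phi_base_ovp:
  assumes t: "0 < t" and \<nu>: "\<forall>q\<in>set \<nu>. 0 < fst q \<and> fst q < t" and ne: "0 < a \<or> \<nu> \<noteq> []"
  shows "phi t (base_ovp t a b \<nu>) = replicate a (t, False) @ \<nu>"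
proof -
  define T where "T = (if a = 0 then [] else (t, b) # replicate (a - 1) (t, False))"
  have base: "base_ovp t a b \<nu> = T @ \<nu>" unfolding base_ovp_def T_def by simp
  have T_t: "\<forall>q\<in>set T. fst q = t" and len: "length T = a" unfolding T_def by auto
  then have vanish: "filter (\<lambda>q. fst q \<noteq> 0) (map (\<lambda>(a, b). (a - t, b)) T) = []"
    by (auto simp: filter_empty_conv)
  show ?thesis
  proof (cases "\<nu> = []")
    case False
    have "0 = fst (last \<nu>) div t" using \<nu> False by simp
    from phi_append[OF False this, of T] show ?thesis
      using \<nu> T_t len vanish base by (simp add: filter_id_conv case_prod_unfold)
  next
    case True
    then have "T \<noteq> []" using ne T_def by simp
    moreover have "1 = fst (last T) div t" using T_t \<open>T \<noteq> []\<close> t by simp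
    ultimately show ?thesis using phi_append[of T 1 t "[]"] T_t len vanish base True t by simp
  qed
qed

lemma Gbar_small_hd_phi:
  assumes t: "0 < t" and \<nu>: "\<forall>q\<in>set \<nu>. fst q < t" and G: "\<pi> \<in> Gbar t"
    and h: "fst (hd \<pi>) \<le> t" and ph: "phi t \<pi> = replicate m (t, False) @ \<nu>"
  obtains b where "m = 0 \<longrightarrow> \<not> b" "\<pi> = base_ovp t m b \<nu>"
proof -
  obtain a b \<nu>' where \<pi>: "\<pi> = base_ovp t a b \<nu>'" and ab: "a = 0 \<longrightarrow> \<not> b"
    and \<nu>': "\<forall>q\<in>set \<nu>'. fst q < t"
    using Gbar_small_hd_base[OF G h] by blast
  have "set \<nu>' \<subseteq> set \<pi>" unfolding \<pi> base_ovp_def by auto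
  then have pos: "\<forall>q\<in>set \<nu>'. 0 < fst q \<and> fst q < t" using \<nu>' GbarD(3)[OF G] by blast
  have ne: "0 < a \<or> \<nu>' \<noteq> []" using GbarD(1)[OF G] \<pi> unfolding base_ovp_def by auto
  have "replicate a (t, False) @ \<nu>' = replicate m (t, False) @ \<nu>"
    using phi_base_ovp[OF t pos ne, of b] \<pi> ph by simp
  moreover have "(t, False) \<notin> set \<nu>'" "(t, False) \<notin> set \<nu>" using \<nu> \<nu>' by auto
  ultimately have "a = m" "\<nu>' = \<nu>" using replicate_append_cancel[of "(t, False)" \<nu>' \<nu> a m] by simp_all
  then show ?thesis using that[of b] \<pi> ab by simp
qed

section \<open>All preimages\<close>

text \<open>The pair \<open>(a, b)\<close> stands for the preimage obtained by lifting \<open>m - a\<close> times the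
  overpartition \<open>t\<^sup>a \<nu>\<close> whose first \<open>t\<close> is overlined iff \<open>b\<close>.\<close>

definition preimage_params :: "nat \<Rightarrow> ovp \<Rightarrow> (nat \<times> bool) set" where
  "preimage_params m \<nu> = {(a, b). a \<le> m \<and> (a = 0 \<longrightarrow> \<not> b \<and> \<nu> \<noteq> [])}"

definition preimage_of :: "nat \<Rightarrow> nat \<Rightarrow> ovp \<Rightarrow> nat \<times> bool \<Rightarrow> ovp" where
  "preimage_of t m \<nu> = (\<lambda>(a, b). (lift_last t ^^ (m - a)) (base_ovp t a b \<nu>))"

lemma Gbar_phi_preimage:
  assumes t: "0 < t" and \<nu>: "\<forall>q\<in>set \<nu>. fst q < t"
  shows "\<pi> \<in> Gbar t \<Longrightarrow> phi t \<pi> = replicate m (t, False) @ \<nu> \<Longrightarrow>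
    \<pi> \<in> preimage_of t m \<nu> ` preimage_params m \<nu>"
proof (induction m arbitrary: \<pi>)
  case 0
  have "fst (hd \<pi>) \<le> t"
  proof (rule ccontr)
    assume "\<not> fst (hd \<pi>) \<le> t"
    then have "phi t \<pi> = (t, False) # phi t (lower_hd t \<pi>)"
      using lower_hd_Gbar[OF t 0(1)] phi_lift_last[OF t] by (metis not_le)
    then show False using 0(2) \<nu> by auto
  qed
  then obtain b where "\<pi> = base_ovp t 0 b \<nu>" using Gbar_small_hd_phi[OF t \<nu> 0(1) _ 0(2)] by blast
  then have "\<pi> = preimage_of t 0 \<nu> (0, False)" "\<nu> \<noteq> []"
    using GbarD(1)[OF 0(1)] by (simp_all add: preimage_of_def base_ovp_def)
  then show ?case unfolding preimage_params_def by auto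
next
  case (Suc m)
  show ?case
  proof (cases "fst (hd \<pi>) \<le> t")
    case True
    then obtain b where "\<pi> = base_ovp t (Suc m) b \<nu>"
      using Gbar_small_hd_phi[OF t \<nu> Suc(2) True Suc(3)] by blast
    then have "\<pi> = preimage_of t (Suc m) \<nu> (Suc m, b)" by (simp add: preimage_of_def)
    then show ?thesis unfolding preimage_params_def by auto
  next
    case False
    then have low: "lower_hd t \<pi> \<in> Gbar t" "lift_last t (lower_hd t \<pi>) = \<pi>"
      using lower_hd_Gbar[OF t Suc(2)] by auto
    then have "phi t (lower_hd t \<pi>) = replicate m (t, False) @ \<nu>"
      using phi_lift_last[OF t low(1)] Suc(3) by simp
    then obtain a b where ab: "(a, b) \<in> preimage_params m \<nu>" "lower_hd t \<pi> = preimage_of t m \<nu> (a, b)"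
      using Suc.IH[OF low(1)] by auto
    then have "\<pi> = preimage_of t (Suc m) \<nu> (a, b)"
      using low(2) by (simp add: preimage_of_def preimage_params_def Suc_diff_le)
    moreover have "(a, b) \<in> preimage_params (Suc m) \<nu>" using ab(1) by (auto simp: preimage_params_def)
    ultimately show ?thesis by blast
  qed
qed

lemma base_ovp_params_Gbar:
  assumes "0 < t" "is_overpartition \<nu>" "\<forall>q\<in>set \<nu>. fst q < t" "(a, b) \<in> preimage_params m \<nu>"
  shows "base_ovp t a b \<nu> \<in> Gbar t"
  using assms by (intro base_ovp_Gbar) (auto simp: preimage_params_def)

lemma preimage_of_Gbar_phi:
  assumes t: "0 < t" and \<nu>: "is_overpartition \<nu>" "\<forall>q\<in>set \<nu>. fst q < t"
    and x: "x \<in> preimage_params m \<nu>"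
  shows "preimage_of t m \<nu> x \<in> Gbar t" "phi t (preimage_of t m \<nu> x) = replicate m (t, False) @ \<nu>"
proof -
  obtain a b where ab: "x = (a, b)" "a \<le> m" "0 < a \<or> \<nu> \<noteq> []"
    using x by (cases x) (auto simp: preimage_params_def)
  have G: "base_ovp t a b \<nu> \<in> Gbar t" using base_ovp_params_Gbar[OF t \<nu>] x ab(1) by simp
  then show "preimage_of t m \<nu> x \<in> Gbar t"
    unfolding ab(1) preimage_of_def by (simp add: funpow_lift_last_Gbar[OF t])
  have "\<forall>q\<in>set \<nu>. 0 < fst q \<and> fst q < t" using \<nu> by (auto simp: is_overpartition_iff)
  then show "phi t (preimage_of t m \<nu> x) = replicate m (t, False) @ \<nu>"
    unfolding ab(1) preimage_of_def using phi_funpow_lift_last[OF t G] phi_base_ovp[OF t _ ab(3)] ab(2)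
    by (simp flip: replicate_add)
qed

lemma phi_preimage_eq:
  assumes "0 < t" "is_overpartition \<nu>" "\<forall>q\<in>set \<nu>. fst q < t"
  shows "{\<pi> \<in> Gbar t. phi t \<pi> = replicate m (t, False) @ \<nu>} = preimage_of t m \<nu> ` preimage_params m \<nu>"
  using Gbar_phi_preimage[OF assms(1,3)] preimage_of_Gbar_phi[OF assms] by blast

lemma preimage_of_same_level:
  assumes t: "0 < t" and \<nu>: "is_overpartition \<nu>" "\<forall>q\<in>set \<nu>. fst q < t"
    and x: "(a, b) \<in> preimage_params m \<nu>" and y: "(a', b') \<in> preimage_params m \<nu>" and "a \<le> a'"
    and eq: "preimage_of t m \<nu> (a, b) = preimage_of t m \<nu> (a', b')"
  shows "a = a'"
proof (rule ccontr)
  assume "a \<noteq> a'"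
  define d where "d = a' - a - 1"
  have d: "a' - a = Suc d" "0 < a'" using \<open>a \<le> a'\<close> \<open>a \<noteq> a'\<close> unfolding d_def by simp_all
  define \<rho> where "\<rho> = (lift_last t ^^ d) (base_ovp t a b \<nu>)"
  have G: "base_ovp t a b \<nu> \<in> Gbar t" "base_ovp t a' b' \<nu> \<in> Gbar t"
    using base_ovp_params_Gbar[OF t \<nu>] x y by auto
  have "m - a = (m - a') + Suc d" using d y \<open>a \<le> a'\<close> by (auto simp: preimage_params_def)
  then have "lift_last t ^^ (m - a) = lift_last t ^^ (m - a') \<circ> lift_last t ^^ Suc d"
    by (simp only: funpow_add)
  then have "(lift_last t ^^ (m - a')) (lift_last t \<rho>) = (lift_last t ^^ (m - a')) (base_ovp t a' b' \<nu>)"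
    using eq unfolding preimage_of_def \<rho>_def by simp
  moreover have "\<rho> \<in> Gbar t" unfolding \<rho>_def using funpow_lift_last_Gbar[OF t G(1)] .
  moreover have "lift_last t \<rho> \<noteq> []" by (simp add: lift_last_def)
  ultimately have "lift_last t \<rho> = base_ovp t a' b' \<nu>" "t < fst (hd (lift_last t \<rho>))"
    using funpow_lift_last_inj GbarD(1)[OF G(2)] lift_last_hd_gt[OF t] by blast+
  then show False using hd_base_ovp[OF d(2)] by simp
qed

lemma inj_on_preimage_of:
  assumes t: "0 < t" and \<nu>: "is_overpartition \<nu>" "\<forall>q\<in>set \<nu>. fst q < t"
  shows "inj_on (preimage_of t m \<nu>) (preimage_params m \<nu>)"
proof (rule inj_onI, clarify)
  fix a b a' b' assume x: "(a, b) \<in> preimage_params m \<nu>" and y: "(a', b') \<in> preimage_params m \<nu>"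
    and eq: "preimage_of t m \<nu> (a, b) = preimage_of t m \<nu> (a', b')"
  have a: "a = a'"
    using preimage_of_same_level[OF t \<nu> x y _ eq] preimage_of_same_level[OF t \<nu> y x _ eq[symmetric]]
    by linarith
  have G: "base_ovp t a b \<nu> \<in> Gbar t" "base_ovp t a' b' \<nu> \<in> Gbar t"
    using base_ovp_params_Gbar[OF t \<nu>] x y by auto
  have "(lift_last t ^^ (m - a')) (base_ovp t a' b \<nu>) = (lift_last t ^^ (m - a')) (base_ovp t a' b' \<nu>)"
    using eq unfolding a preimage_of_def by simp
  then have base: "base_ovp t a' b \<nu> = base_ovp t a' b' \<nu>"
    by (rule funpow_lift_last_inj[OF GbarD(1)[OF G(1)[unfolded a]] GbarD(1)[OF G(2)]])
  have "b = b'"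
  proof (cases "a' = 0")
    case False
    then show ?thesis using arg_cong[OF base, of hd] hd_base_ovp[of a' t] by simp
  qed (use x y a in \<open>simp add: preimage_params_def\<close>)
  then show "a = a' \<and> b = b'" using a by simp
qed

lemma num_ovl_preimage_of:
  assumes "x \<in> preimage_params m \<nu>"
  shows "num_ovl (preimage_of t m \<nu> x) = (if snd x then 1 else 0) + num_ovl \<nu>"
proof -
  obtain a b where ab: "x = (a, b)" "a = 0 \<longrightarrow> \<not> b \<and> \<nu> \<noteq> []"
    using assms by (cases x) (auto simp: preimage_params_def)
  then have "base_ovp t a b \<nu> \<noteq> []" by (auto simp: base_ovp_def)
  then show ?thesis
    unfolding ab(1) preimage_of_def using ab(2) by (auto simp: num_ovl_funpow_lift_last num_ovl_base_ovp)
qed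

text \<open>When \<open>\<nu> = []\<close>, every preimage consists of parts of two consecutive sizes \<open>v + t\<close> and \<open>v\<close>,
  the overline (if any) on the first part of size \<open>v\<close>.\<close>

definition two_level :: "nat \<Rightarrow> nat \<Rightarrow> nat \<Rightarrow> bool \<Rightarrow> nat \<Rightarrow> ovp" where
  "two_level t i v b j = replicate i (v + t, False) @ (v, b) # replicate j (v, False)"

lemma lift_last_two_level:
  "lift_last t (two_level t i v b j) =
    (if 0 < j then two_level t (Suc i) v b (j - 1) else two_level t 0 (v + t) b i)"
proof (cases j)
  case (Suc j')
  have "x # butlast (replicate (Suc n) x) = replicate (Suc n) x" for n and x :: "nat \<times> bool"
    by (induction n) auto
  then show ?thesis unfolding two_level_def lift_last_def Suc by (simp add: butlast_append)
qed (simp add: two_level_def lift_last_def butlast_append)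

lemma funpow_lift_last_two_level:
  "0 < v \<Longrightarrow> \<exists>i' v' j'. 0 < v' \<and> (lift_last t ^^ n) (two_level t i v b j) = two_level t i' v' b j'"
proof (induction n)
  case (Suc n)
  then obtain i' v' j' where "0 < v'" "(lift_last t ^^ n) (two_level t i v b j) = two_level t i' v' b j'"
    by blast
  then show ?case using lift_last_two_level[of t i' v' b j'] by (cases "0 < j'") auto
qed auto

lemma smallest_first_ovl_two_level: "0 < t \<Longrightarrow> smallest_first_ovl (two_level t i v b j) = b"
proof -
  assume t: "0 < t"
  have "fst (last (two_level t i v b j)) = v" unfolding two_level_def by (cases j) auto
  moreover have "dropWhile (\<lambda>q. fst q \<noteq> v) (two_level t i v b j) = (v, b) # replicate j (v, False)"
    unfolding two_level_def using t by (induction i) auto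
  ultimately show ?thesis unfolding smallest_first_ovl_def by simp
qed

lemma smallest_first_ovl_preimage_of:
  assumes t: "0 < t" and x: "x \<in> preimage_params m []"
  shows "smallest_first_ovl (preimage_of t m [] x) = snd x"
proof -
  obtain a b where ab: "x = (a, b)" "0 < a" using x by (cases x) (auto simp: preimage_params_def)
  have "base_ovp t a b [] = two_level t 0 t b (a - 1)"
    using ab(2) unfolding base_ovp_def two_level_def by simp
  moreover obtain i v j where "(lift_last t ^^ (m - a)) (two_level t 0 t b (a - 1)) = two_level t i v b j"
    using funpow_lift_last_two_level[OF t] by blast
  ultimately show ?thesis unfolding ab(1) preimage_of_def using smallest_first_ovl_two_level[OF t] by simp
qed

lemma card_phi_preimages_filter:
  assumes "0 < t" "is_overpartition \<nu>" "\<forall>q\<in>set \<nu>. fst q < t"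
  shows "card {\<pi> \<in> Gbar t. phi t \<pi> = replicate m (t, False) @ \<nu> \<and> Q \<pi>} =
    card {x \<in> preimage_params m \<nu>. Q (preimage_of t m \<nu> x)}"
proof -
  have "{\<pi> \<in> Gbar t. phi t \<pi> = replicate m (t, False) @ \<nu> \<and> Q \<pi>} =
      {\<pi> \<in> {\<pi> \<in> Gbar t. phi t \<pi> = replicate m (t, False) @ \<nu>}. Q \<pi>}" by auto
  also have "\<dots> = preimage_of t m \<nu> ` {x \<in> preimage_params m \<nu>. Q (preimage_of t m \<nu> x)}"
    unfolding phi_preimage_eq[OF assms] by auto
  finally have "{\<pi> \<in> Gbar t. phi t \<pi> = replicate m (t, False) @ \<nu> \<and> Q \<pi>} =
      preimage_of t m \<nu> ` {x \<in> preimage_params m \<nu>. Q (preimage_of t m \<nu> x)}" .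
  moreover have "inj_on (preimage_of t m \<nu>) {x \<in> preimage_params m \<nu>. Q (preimage_of t m \<nu> x)}"
    using inj_on_preimage_of[OF assms] by (rule inj_on_subset) auto
  ultimately show ?thesis by (simp add: card_image)
qed

lemma preimage_params_snd: "{x \<in> preimage_params m \<nu>. snd x} = (\<lambda>a. (a, True)) ` {1..m}"
  unfolding preimage_params_def by auto

lemma preimage_params_not_snd:
  "{x \<in> preimage_params m \<nu>. \<not> snd x} = (\<lambda>a. (a, False)) ` (if \<nu> = [] then {1..m} else {..m})"
  unfolding preimage_params_def by auto

lemma card_preimage_params_snd: "card {x \<in> preimage_params m \<nu>. snd x} = m"
  unfolding preimage_params_snd by (simp add: card_image inj_on_def)

lemma card_preimage_params_not_snd:
  "card {x \<in> preimage_params m \<nu>. \<not> snd x} = (if \<nu> = [] then m else m + 1)"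
  unfolding preimage_params_not_snd by (simp add: card_image inj_on_def)

lemma card_preimage_params: "card (preimage_params m \<nu>) = (if \<nu> = [] then 2 * m else 2 * m + 1)"
proof -
  let ?S = "{x \<in> preimage_params m \<nu>. snd x}" and ?N = "{x \<in> preimage_params m \<nu>. \<not> snd x}"
  have "finite ?S" "finite ?N" unfolding preimage_params_snd preimage_params_not_snd by simp_all
  then have "card (?S \<union> ?N) = card ?S + card ?N" by (rule card_Un_disjoint) auto
  moreover have "?S \<union> ?N = preimage_params m \<nu>" by blast
  ultimately show ?thesis using card_preimage_params_snd card_preimage_params_not_snd by simp
qed

lemma Pbar_decomp:
  assumes "\<mu> \<in> Pbar t"
  obtains \<nu> where "\<mu> = replicate (mult_t t \<mu>) (t, False) @ \<nu>" "is_overpartition \<nu>" "\<forall>q\<in>set \<nu>. fst q < t"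
proof -
  define T where "T = takeWhile (\<lambda>q. fst q = t) \<mu>"
  define \<nu> where "\<nu> = dropWhile (\<lambda>q. fst q = t) \<mu>"
  have \<mu>: "\<mu> = T @ \<nu>" unfolding T_def \<nu>_def by simp
  have P: "is_overpartition \<mu>" "\<forall>q\<in>set \<mu>. fst q \<le> t \<and> (fst q = t \<longrightarrow> \<not> snd q)"
    using assms unfolding Pbar_def by auto
  have T_t: "\<forall>q\<in>set T. q = (t, False)"
  proof
    fix q assume "q \<in> set T"
    then have "fst q = t" "q \<in> set \<mu>" unfolding T_def by (auto dest: set_takeWhileD)
    then show "q = (t, False)" using P(2) by (cases q) auto
  qed
  have \<nu>_ovp: "is_overpartition \<nu>"
    using P(1) unfolding \<mu> is_overpartition_iff by (simp add: sorted_wrt_append ovl_first_occ_append)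
  have \<nu>_lt: "\<forall>q\<in>set \<nu>. fst q < t"
  proof
    fix q assume q: "q \<in> set \<nu>"
    then have "\<nu> \<noteq> []" by auto
    then have "fst (hd \<nu>) \<noteq> t" using hd_dropWhile[of "\<lambda>q. fst q = t" \<mu>] unfolding \<nu>_def by auto
    moreover have "hd \<nu> \<in> set \<mu>" using \<open>\<nu> \<noteq> []\<close> \<mu> by (metis Un_iff hd_in_set set_append)
    ultimately have "fst (hd \<nu>) < t" using P(2) by (meson le_neq_implies_less)
    moreover have "sorted_wrt size_ge \<nu>" using \<nu>_ovp unfolding is_overpartition_iff by blast
    ultimately show "fst q < t" using sorted_size_bounds[of \<nu> q] q by simp
  qed
  have "filter (\<lambda>q. fst q = t) T = T" using T_t by (auto simp: filter_id_conv)
  moreover have "filter (\<lambda>q. fst q = t) \<nu> = []" using \<nu>_lt by (auto simp: filter_empty_conv)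
  ultimately have "mult_t t \<mu> = length T" unfolding mult_t_def \<mu> by simp
  then have "\<mu> = replicate (mult_t t \<mu>) (t, False) @ \<nu>"
    using T_t \<mu> by (simp add: replicate_length_same)
  then show ?thesis using that \<nu>_ovp \<nu>_lt by blast
qed

theorem mainTheorem5:
  fixes t :: nat and mu :: ovp
  assumes "0 < t" and "mu \<in> Pbar t"
  shows "(length mu = mult_t t mu \<longrightarrow>
            card {p \<in> Gbar t. phi t p = mu} = 2 * mult_t t mu \<and>
            card {p \<in> Gbar t. phi t p = mu \<and> num_ovl p = 0} = mult_t t mu \<and>
            card {p \<in> Gbar t. phi t p = mu \<and> smallest_first_ovl p} = mult_t t mu)
       \<and> (length mu > mult_t t mu \<longrightarrow>
            card {p \<in> Gbar t. phi t p = mu} = 2 * mult_t t mu + 1 \<and>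
            card {p \<in> Gbar t. phi t p = mu \<and> num_ovl p = num_ovl mu} = mult_t t mu + 1 \<and>
            card {p \<in> Gbar t. phi t p = mu \<and> num_ovl p = num_ovl mu + 1} = mult_t t mu)"
proof -
  define m where "m = mult_t t mu"
  obtain \<nu> where \<mu>: "mu = replicate m (t, False) @ \<nu>" and \<nu>: "is_overpartition \<nu>" "\<forall>q\<in>set \<nu>. fst q < t"
    using Pbar_decomp[OF assms(2)] unfolding m_def by blast
  let ?I = "preimage_params m \<nu>" and ?f = "preimage_of t m \<nu>"
  have count: "card {p \<in> Gbar t. phi t p = mu \<and> Q p} = card {x \<in> ?I. Q (?f x)}" for Q
    unfolding \<mu> by (rule card_phi_preimages_filter[OF assms(1) \<nu>])
  have all: "card {p \<in> Gbar t. phi t p = mu} = card ?I" using count[of "\<lambda>_. True"] by simp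
  have same_ovl: "{x \<in> ?I. num_ovl (?f x) = num_ovl \<nu>} = {x \<in> ?I. \<not> snd x}"
    and more_ovl: "{x \<in> ?I. num_ovl (?f x) = num_ovl \<nu> + 1} = {x \<in> ?I. snd x}"
    using num_ovl_preimage_of by (auto split: if_splits)
  have "num_ovl mu = num_ovl \<nu>" "length mu = m + length \<nu>" unfolding \<mu> num_ovl_def by simp_all
  then show ?thesis
  proof (intro conjI impI)
    assume "length mu = mult_t t mu"
    then have "\<nu> = []" using \<open>length mu = m + length \<nu>\<close> m_def by simp
    moreover have "{x \<in> ?I. smallest_first_ovl (?f x)} = {x \<in> ?I. snd x}"
      using smallest_first_ovl_preimage_of[OF assms(1)] \<open>\<nu> = []\<close> by auto
    ultimately show "card {p \<in> Gbar t. phi t p = mu} = 2 * mult_t t mu"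
      "card {p \<in> Gbar t. phi t p = mu \<and> num_ovl p = 0} = mult_t t mu"
      "card {p \<in> Gbar t. phi t p = mu \<and> smallest_first_ovl p} = mult_t t mu"
      using all count same_ovl card_preimage_params card_preimage_params_snd card_preimage_params_not_snd
      unfolding m_def by (simp_all add: num_ovl_def)
  next
    assume "mult_t t mu < length mu"
    then have "\<nu> \<noteq> []" using \<open>length mu = m + length \<nu>\<close> m_def by auto
    then show "card {p \<in> Gbar t. phi t p = mu} = 2 * mult_t t mu + 1"
      "card {p \<in> Gbar t. phi t p = mu \<and> num_ovl p = num_ovl mu} = mult_t t mu + 1"
      "card {p \<in> Gbar t. phi t p = mu \<and> num_ovl p = num_ovl mu + 1} = mult_t t mu"
      using all count same_ovl more_ovl card_preimage_params card_preimage_params_snd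
        card_preimage_params_not_snd \<open>num_ovl mu = num_ovl \<nu>\<close>
      unfolding m_def by simp_all
  qed
qed

end
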